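(* Let $u\in\mathbb{R}_+^d$ and $r\in\mathbb{R}$, and assume $I^\infty_u$ is left continuous at $r$. Then $$\lim_{\beta\to\infty}J^\beta_u(\beta r)=I^\infty_u(r).$$
   Context: Let $d\ge1$. Environment: $\{\omega(v):v\in\mathbb{Z}_+^d\}$ i.i.d. under $\mathbb{P}$ with $\mathbb{E}e^{\xi|\omega(v)|}<\infty$ for some $\xi>0$ and $\mathbb{P}\{\omega(v)\ge0\}>0$. For $v\in\mathbb{Z}_+^d$ with $\|v\|_1=m$, let $\Pi(v)$ be the set of paths $0=x_0,\dots,x_m=v$ with increments standard basis vectors, $Z^\beta_v=\sum_{x\in\Pi(v)}\exp\{\beta\sum_{j=1}^m\omega(x_j)\}$ and $T(v)=\max_{x\in\Pi(v)}\sum_{j=1}^m\omega(x_j)$ (last passage time). The rate functions $J^\beta_u(r)=-\lim_n n^{-1}\log\mathbb{P}\{\log Z^\beta_{\lfloor nu\rfloor}\ge nr\}$ and $I^\infty_u(r)=-\lim_n n^{-1}\log\mathbb{P}\{T(\lfloor nu\rfloor)\ge nr\}$ are defined by these limits (which exist), with $\lfloor nu\rfloor$ coordinatewise. *)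

theory Defs
  imports "HOL-Probability.Probability"
begin

text \<open>Lattice points of Z_+^d are functions 'd => nat for a finite nonempty index type 'd
  (so d = CARD('d) >= 1). Up-right paths from 0 to v are lists x_0,...,x_m of lattice points.\<close>

definition unit_step :: "('d \<Rightarrow> nat) \<Rightarrow> ('d \<Rightarrow> nat) \<Rightarrow> bool" where
  "unit_step a b \<longleftrightarrow> (\<exists>i. b = a(i := Suc (a i)))"

definition l1norm :: "('d::finite \<Rightarrow> nat) \<Rightarrow> nat" where
  "l1norm v = (\<Sum>i\<in>UNIV. v i)"

definition paths :: "('d::finite \<Rightarrow> nat) \<Rightarrow> ('d \<Rightarrow> nat) list set" where
  "paths v = {xs. length xs = Suc (l1norm v) \<and> xs ! 0 = (\<lambda>_. 0) \<and> xs ! l1norm v = v \<and>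
                 (\<forall>j < l1norm v. unit_step (xs ! j) (xs ! Suc j))}"

definition path_weight :: "(('d::finite \<Rightarrow> nat) \<Rightarrow> real) \<Rightarrow> ('d \<Rightarrow> nat) \<Rightarrow> ('d \<Rightarrow> nat) list \<Rightarrow> real" where
  "path_weight w v xs = (\<Sum>j\<in>{1..l1norm v}. w (xs ! j))"

definition partition_fn :: "real \<Rightarrow> (('d::finite \<Rightarrow> nat) \<Rightarrow> real) \<Rightarrow> ('d \<Rightarrow> nat) \<Rightarrow> real" where
  "partition_fn \<beta> w v = (\<Sum>xs\<in>paths v. exp (\<beta> * path_weight w v xs))"

definition lpp_time :: "(('d::finite \<Rightarrow> nat) \<Rightarrow> real) \<Rightarrow> ('d \<Rightarrow> nat) \<Rightarrow> real" where
  "lpp_time w v = Max (path_weight w v ` paths v)"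

definition floor_scale :: "nat \<Rightarrow> ('d \<Rightarrow> real) \<Rightarrow> ('d \<Rightarrow> nat)" where
  "floor_scale n u = (\<lambda>i. nat \<lfloor>real n * u i\<rfloor>)"

definition lnE :: "real \<Rightarrow> ereal" where
  "lnE p = (if p \<le> 0 then -\<infinity> else ereal (ln p))"

definition J_seq :: "'a measure \<Rightarrow> (('d::finite \<Rightarrow> nat) \<Rightarrow> 'a \<Rightarrow> real) \<Rightarrow> real \<Rightarrow> ('d \<Rightarrow> real) \<Rightarrow> real \<Rightarrow> nat \<Rightarrow> ereal" where
  "J_seq M \<omega> \<beta> u r n =
     lnE (measure M {x \<in> space M. ln (partition_fn \<beta> (\<lambda>v. \<omega> v x) (floor_scale n u)) \<ge> real n * r})
       / ereal (real n)"

definition I_seq :: "'a measure \<Rightarrow> (('d::finite \<Rightarrow> nat) \<Rightarrow> 'a \<Rightarrow> real) \<Rightarrow> ('d \<Rightarrow> real) \<Rightarrow> real \<Rightarrow> nat \<Rightarrow> ereal" where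
  "I_seq M \<omega> u r n =
     lnE (measure M {x \<in> space M. lpp_time (\<lambda>v. \<omega> v x) (floor_scale n u) \<ge> real n * r})
       / ereal (real n)"

definition J_rate :: "'a measure \<Rightarrow> (('d::finite \<Rightarrow> nat) \<Rightarrow> 'a \<Rightarrow> real) \<Rightarrow> real \<Rightarrow> ('d \<Rightarrow> real) \<Rightarrow> real \<Rightarrow> ereal" where
  "J_rate M \<omega> \<beta> u r = - lim (J_seq M \<omega> \<beta> u r)"

definition I_rate :: "'a measure \<Rightarrow> (('d::finite \<Rightarrow> nat) \<Rightarrow> 'a \<Rightarrow> real) \<Rightarrow> ('d \<Rightarrow> real) \<Rightarrow> real \<Rightarrow> ereal" where
  "I_rate M \<omega> u r = - lim (I_seq M \<omega> u r)"

end

theory Submission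
  imports Defs
begin

text \<open>A path to \<open>v\<close> has \<open>\<parallel>v\<parallel>\<^sub>1\<close> steps, each in one of \<open>d\<close> directions, so
  \<open>exp (\<beta> T(v)) \<le> Z\<^sup>\<beta>\<^sub>v \<le> d\<^bsup>\<parallel>v\<parallel>\<^sub>1\<^esup> exp (\<beta> T(v))\<close>. With \<open>c \<ge> (\<Sum>\<^sub>i u\<^sub>i) log d\<close> this gives
  \<open>{T(\<lfloor>nu\<rfloor>) \<ge> nr} \<subseteq> {log Z\<^sup>\<beta>(\<lfloor>nu\<rfloor>) \<ge> n\<beta>r} \<subseteq> {T(\<lfloor>nu\<rfloor>) \<ge> n(r - c/\<beta>)}\<close>, hence
  \<open>I\<^sup>\<infinity>\<^sub>u(r - c/\<beta>) \<le> J\<^sup>\<beta>\<^sub>u(\<beta>r) \<le> I\<^sup>\<infinity>\<^sub>u(r)\<close>, and left continuity of \<open>I\<^sup>\<infinity>\<^sub>u\<close> at \<open>r\<close> closes the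
  sandwich as \<open>\<beta> \<rightarrow> \<infinity>\<close>.\<close>

definition step_direction :: "('d \<Rightarrow> nat) \<Rightarrow> ('d \<Rightarrow> nat) \<Rightarrow> 'd" where
  "step_direction a b = (SOME i. b = a(i := Suc (a i)))"

lemma unit_step_direction:
  "unit_step a b \<Longrightarrow> b = a(step_direction a b := Suc (a (step_direction a b)))"
  unfolding unit_step_def step_direction_def by (rule someI_ex)

definition path_directions :: "('d::finite \<Rightarrow> nat) \<Rightarrow> ('d \<Rightarrow> nat) list \<Rightarrow> 'd list" where
  "path_directions v xs = map (\<lambda>j. step_direction (xs ! j) (xs ! Suc j)) [0..<l1norm v]"

lemma inj_on_path_directions: "inj_on (path_directions v) (paths v)"
proof (rule inj_onI)
  fix xs ys assume xs: "xs \<in> paths v" and ys: "ys \<in> paths v"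
    and dirs: "path_directions v xs = path_directions v ys"
  have "xs ! j = ys ! j" if "j \<le> l1norm v" for j
    using that
  proof (induction j)
    case 0
    then show ?case using xs ys by (simp add: paths_def)
  next
    case (Suc j)
    then have IH: "xs ! j = ys ! j" by simp
    have steps: "unit_step (xs ! j) (xs ! Suc j)" "unit_step (ys ! j) (ys ! Suc j)"
      using xs ys Suc.prems by (auto simp: paths_def)
    have "step_direction (xs ! j) (xs ! Suc j) = step_direction (ys ! j) (ys ! Suc j)"
      using dirs Suc.prems by (auto simp: path_directions_def)
    then show ?case
      using unit_step_direction[OF steps(1)] unit_step_direction[OF steps(2)] IH by simp
  qed
  then show "xs = ys"
    using xs ys by (intro nth_equalityI) (auto simp: paths_def)
qed

lemma path_directions_in_lists:
  "path_directions v ` paths v \<subseteq> {ds. set ds \<subseteq> UNIV \<and> length ds = l1norm v}"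
  by (auto simp: path_directions_def)

lemma finite_paths [simp]: "finite (paths (v :: 'd::finite \<Rightarrow> nat))"
proof -
  have "finite (path_directions v ` paths v)"
    by (rule finite_subset[OF path_directions_in_lists finite_lists_length_eq]) simp
  then show ?thesis
    using finite_imageD inj_on_path_directions by blast
qed

lemma card_paths_le: "card (paths (v :: 'd::finite \<Rightarrow> nat)) \<le> CARD('d) ^ l1norm v"
proof -
  have "card (paths v) = card (path_directions v ` paths v)"
    using card_image[OF inj_on_path_directions[of v]] by simp
  also have "\<dots> \<le> card {ds. set ds \<subseteq> (UNIV :: 'd set) \<and> length ds = l1norm v}"
    by (rule card_mono[OF finite_lists_length_eq path_directions_in_lists]) simp
  also have "\<dots> = CARD('d) ^ l1norm v"
    by (rule card_lists_length_eq) simp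
  finally show ?thesis .
qed

lemma l1norm_decrement:
  assumes "v i > 0"
  shows "l1norm v = Suc (l1norm (v(i := v i - 1)))"
proof -
  have "sum v UNIV = v i + sum v (UNIV - {i})"
    by (rule sum.remove) auto
  moreover have "sum (v(i := v i - 1)) UNIV = (v i - 1) + sum v (UNIV - {i})"
    by (subst sum.remove[of UNIV i]) (auto intro!: sum.cong)
  ultimately show ?thesis using assms by (simp add: l1norm_def)
qed

lemma paths_nonempty: "paths (v :: 'd::finite \<Rightarrow> nat) \<noteq> {}"
proof (induction "l1norm v" arbitrary: v)
  case 0
  then have "v = (\<lambda>_. 0)" by (auto simp: l1norm_def)
  then have "[v] \<in> paths v" using 0 by (simp add: paths_def)
  then show ?case by blast
next
  case (Suc m)
  have "sum v UNIV = Suc m" using Suc.hyps(2) by (simp add: l1norm_def)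
  then obtain i where i: "v i > 0" by (metis Suc_neq_Zero neq0_conv sum.neutral)
  define v' where "v' = v(i := v i - 1)"
  have v: "v = v'(i := Suc (v' i))" using i by (auto simp: v'_def)
  have m: "l1norm v' = m" using l1norm_decrement[of v i, OF i] Suc.hyps(2) by (simp add: v'_def)
  then obtain xs where "xs \<in> paths v'" using Suc.hyps(1) by blast
  then have xs: "length xs = Suc m" "xs ! 0 = (\<lambda>_. 0)" "xs ! m = v'"
    "\<And>j. j < m \<Longrightarrow> unit_step (xs ! j) (xs ! Suc j)"
    using m by (auto simp: paths_def)
  have "unit_step ((xs @ [v]) ! j) ((xs @ [v]) ! Suc j)" if "j < Suc m" for j
    using that xs v by (auto simp: nth_append unit_step_def less_Suc_eq)
  then have "xs @ [v] \<in> paths v"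
    using xs Suc.hyps(2) by (auto simp: paths_def nth_append)
  then show ?case by blast
qed

lemma exp_lpp_time_le_partition_fn:
  fixes v :: "'d::finite \<Rightarrow> nat"
  shows "exp (\<beta> * lpp_time w v) \<le> partition_fn \<beta> w v"
proof -
  have "lpp_time w v \<in> path_weight w v ` paths v"
    unfolding lpp_time_def
    using paths_nonempty by (intro Max_in) auto
  then obtain xs where xs: "xs \<in> paths v" "lpp_time w v = path_weight w v xs" by blast
  show ?thesis
    unfolding partition_fn_def xs(2)
    by (rule member_le_sum[OF xs(1)]) auto
qed

lemma partition_fn_le_card_paths:
  fixes v :: "'d::finite \<Rightarrow> nat"
  assumes "\<beta> \<ge> 0"
  shows "partition_fn \<beta> w v \<le> real (card (paths v)) * exp (\<beta> * lpp_time w v)"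
proof -
  have "path_weight w v xs \<le> lpp_time w v" if "xs \<in> paths v" for xs
    unfolding lpp_time_def using that by (intro Max_ge) auto
  then have "partition_fn \<beta> w v \<le> (\<Sum>xs\<in>paths v. exp (\<beta> * lpp_time w v))"
    unfolding partition_fn_def using assms by (intro sum_mono) (auto intro: mult_left_mono)
  then show ?thesis by simp
qed

lemma ln_partition_fn_le:
  fixes v :: "'d::finite \<Rightarrow> nat"
  assumes "\<beta> \<ge> 0"
  shows "ln (partition_fn \<beta> w v) \<le> real (l1norm v) * ln (real CARD('d)) + \<beta> * lpp_time w v"
proof -
  have card: "0 < card (paths v)" "card (paths v) \<le> CARD('d) ^ l1norm v"
    using card_paths_le paths_nonempty card_gt_0_iff finite_paths by blast+
  have "ln (partition_fn \<beta> w v) \<le> ln (real (card (paths v)) * exp (\<beta> * lpp_time w v))"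
    using partition_fn_le_card_paths[OF assms] exp_lpp_time_le_partition_fn[of \<beta> w v]
    by (intro ln_mono) (auto intro: order.strict_trans2[OF exp_gt_zero])
  also have "\<dots> = ln (real (card (paths v))) + \<beta> * lpp_time w v"
    using paths_nonempty[of v] by (simp add: ln_mult)
  also have "ln (real (card (paths v))) \<le> ln (real (CARD('d) ^ l1norm v))"
    using card by (intro ln_mono) (auto simp del: of_nat_power)
  finally show ?thesis by (simp add: ln_realpow)
qed

lemma l1norm_floor_scale_le:
  assumes "\<forall>i. u i \<ge> 0"
  shows "real (l1norm (floor_scale n u)) \<le> real n * (\<Sum>i\<in>UNIV. u i)"
proof -
  have "real (l1norm (floor_scale n u)) = (\<Sum>i\<in>UNIV. real (nat \<lfloor>real n * u i\<rfloor>))"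
    by (simp add: l1norm_def floor_scale_def)
  also have "\<dots> \<le> (\<Sum>i\<in>UNIV. real n * u i)"
  proof (rule sum_mono)
    fix i
    have "0 \<le> real n * u i" using assms by simp
    then show "real (nat \<lfloor>real n * u i\<rfloor>) \<le> real n * u i" by linarith
  qed
  finally show ?thesis by (simp add: sum_distrib_left)
qed

lemma borel_measurable_lpp_time [measurable]:
  assumes [measurable]: "\<And>v. \<omega> v \<in> borel_measurable M"
  shows "(\<lambda>x. lpp_time (\<lambda>v. \<omega> v x) w) \<in> borel_measurable M"
  unfolding lpp_time_def path_weight_def by (intro borel_measurable_Max) auto

lemma borel_measurable_partition_fn [measurable]:
  assumes [measurable]: "\<And>v. \<omega> v \<in> borel_measurable M"
  shows "(\<lambda>x. partition_fn \<beta> (\<lambda>v. \<omega> v x) w) \<in> borel_measurable M"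
  unfolding partition_fn_def path_weight_def by measurable

lemma lnE_mono: "p \<le> q \<Longrightarrow> lnE p \<le> lnE q"
  unfolding lnE_def by auto

lemma rate_antimono:
  assumes "finite_measure M" and "\<And>n. B n \<in> sets M" and "\<And>n. n > 0 \<Longrightarrow> A n \<subseteq> B n"
    and "convergent (\<lambda>n. lnE (measure M (A n)) / ereal (real n))"
    and "convergent (\<lambda>n. lnE (measure M (B n)) / ereal (real n))"
  shows "- lim (\<lambda>n. lnE (measure M (B n)) / ereal (real n))
    \<le> - lim (\<lambda>n. lnE (measure M (A n)) / ereal (real n))"
proof -
  have le: "lnE (measure M (A n)) / ereal (real n) \<le> lnE (measure M (B n)) / ereal (real n)"
    if "n \<ge> 1" for n
    using that assms(2,3) finite_measure.finite_measure_mono[OF assms(1)]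
    by (intro ereal_divide_right_mono lnE_mono) auto
  have "lim (\<lambda>n. lnE (measure M (A n)) / ereal (real n))
      \<le> lim (\<lambda>n. lnE (measure M (B n)) / ereal (real n))"
    by (rule lim_mono[OF le]) (use assms(4,5) in \<open>simp_all add: convergent_LIMSEQ_iff\<close>)
  then show ?thesis by simp
qed

lemma J_rate_le_I_rate:
  assumes "finite_measure M" and "\<And>v. \<omega> v \<in> borel_measurable M" and "\<beta> > 0"
    and "convergent (J_seq M \<omega> \<beta> u (\<beta> * r))" and "convergent (I_seq M \<omega> u r)"
  shows "J_rate M \<omega> \<beta> u (\<beta> * r) \<le> I_rate M \<omega> u r"
  unfolding J_rate_def I_rate_def J_seq_def I_seq_def
proof (rule rate_antimono[OF assms(1) _ _ assms(5,4)[unfolded I_seq_def J_seq_def]])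
  fix n :: nat
  show "{x \<in> space M. ln (partition_fn \<beta> (\<lambda>v. \<omega> v x) (floor_scale n u)) \<ge> real n * (\<beta> * r)}
    \<in> sets M"
    using assms(2) by measurable
  have "real n * (\<beta> * r) \<le> ln (partition_fn \<beta> (\<lambda>v. \<omega> v x) (floor_scale n u))"
    if "real n * r \<le> lpp_time (\<lambda>v. \<omega> v x) (floor_scale n u)" for x
  proof -
    have "real n * (\<beta> * r) \<le> \<beta> * lpp_time (\<lambda>v. \<omega> v x) (floor_scale n u)"
      using mult_left_mono[OF that] assms(3) by (simp add: algebra_simps)
    also have "\<dots> = ln (exp (\<beta> * lpp_time (\<lambda>v. \<omega> v x) (floor_scale n u)))"
      by simp
    also have "\<dots> \<le> ln (partition_fn \<beta> (\<lambda>v. \<omega> v x) (floor_scale n u))"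
      using exp_lpp_time_le_partition_fn by (intro ln_mono) auto
    finally show ?thesis .
  qed
  then show "{x \<in> space M. lpp_time (\<lambda>v. \<omega> v x) (floor_scale n u) \<ge> real n * r}
    \<subseteq> {x \<in> space M. ln (partition_fn \<beta> (\<lambda>v. \<omega> v x) (floor_scale n u)) \<ge> real n * (\<beta> * r)}"
    by auto
qed

lemma I_rate_shifted_le_J_rate:
  fixes \<omega> :: "('d::finite \<Rightarrow> nat) \<Rightarrow> 'a \<Rightarrow> real"
  assumes "finite_measure M" and "\<And>v. \<omega> v \<in> borel_measurable M" and "\<beta> > 0"
    and "\<forall>i. u i \<ge> 0" and c: "(\<Sum>i\<in>UNIV. u i) * ln (real CARD('d)) \<le> c"
    and "convergent (J_seq M \<omega> \<beta> u (\<beta> * r))" and "convergent (I_seq M \<omega> u (r - c / \<beta>))"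
  shows "I_rate M \<omega> u (r - c / \<beta>) \<le> J_rate M \<omega> \<beta> u (\<beta> * r)"
  unfolding J_rate_def I_rate_def J_seq_def I_seq_def
proof (rule rate_antimono[OF assms(1) _ _ assms(6,7)[unfolded I_seq_def J_seq_def]])
  fix n :: nat
  show "{x \<in> space M. lpp_time (\<lambda>v. \<omega> v x) (floor_scale n u) \<ge> real n * (r - c / \<beta>)} \<in> sets M"
    using assms(2) by measurable
  have path_count: "real (l1norm (floor_scale n u)) * ln (real CARD('d)) \<le> real n * c"
    using mult_right_mono[OF l1norm_floor_scale_le[OF assms(4)], of "ln (real CARD('d))" n]
      mult_left_mono[OF c, of "real n"]
    by (simp add: algebra_simps)
  have shift: "\<beta> * (real n * (r - c / \<beta>)) = real n * (\<beta> * r) - real n * c"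
    using assms(3) by (simp add: field_simps)
  have "real n * (r - c / \<beta>) \<le> lpp_time (\<lambda>v. \<omega> v x) (floor_scale n u)"
    if "real n * (\<beta> * r) \<le> ln (partition_fn \<beta> (\<lambda>v. \<omega> v x) (floor_scale n u))" for x
  proof -
    have "\<beta> * (real n * (r - c / \<beta>)) \<le> \<beta> * lpp_time (\<lambda>v. \<omega> v x) (floor_scale n u)"
      using that ln_partition_fn_le[of \<beta> "\<lambda>v. \<omega> v x" "floor_scale n u"] assms(3)
        path_count shift
      by linarith
    then show ?thesis using assms(3) by simp
  qed
  then show "{x \<in> space M. ln (partition_fn \<beta> (\<lambda>v. \<omega> v x) (floor_scale n u)) \<ge> real n * (\<beta> * r)}
    \<subseteq> {x \<in> space M. lpp_time (\<lambda>v. \<omega> v x) (floor_scale n u) \<ge> real n * (r - c / \<beta>)}"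
    using assms(3) by auto
qed

lemma tendsto_left_shift_at_top:
  fixes f :: "real \<Rightarrow> 'b::topological_space"
  assumes "(f \<longlongrightarrow> f r) (at_left r)" and "c > 0"
  shows "((\<lambda>\<beta>. f (r - c / \<beta>)) \<longlongrightarrow> f r) at_top"
proof -
  have "((\<lambda>\<beta>. c / \<beta>) \<longlongrightarrow> 0) at_top"
    by (rule tendsto_divide_0[OF tendsto_const filterlim_at_top_imp_at_infinity[OF filterlim_ident]])
  then have "((\<lambda>\<beta>. r - c / \<beta>) \<longlongrightarrow> r - 0) at_top"
    by (intro tendsto_diff tendsto_const)
  moreover have "\<forall>\<^sub>F \<beta> in at_top. r - c / \<beta> < r"
    using eventually_gt_at_top[of 0] by eventually_elim (use assms(2) in simp)
  ultimately have "filterlim (\<lambda>\<beta>. r - c / \<beta>) (at_left r) at_top"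
    by (intro tendsto_imp_filterlim_at_left) simp_all
  then show ?thesis using filterlim_compose[OF assms(1)] by blast
qed

theorem proposition2p6:
  fixes M :: "'a measure" and \<omega> :: "('d::finite \<Rightarrow> nat) \<Rightarrow> 'a \<Rightarrow> real"
    and u :: "'d \<Rightarrow> real" and r :: real
  assumes "prob_space M"
    and "prob_space.indep_vars M (\<lambda>_. borel) \<omega> UNIV"
    and "\<forall>v. distr M borel (\<omega> v) = distr M borel (\<omega> (\<lambda>_. 0))"
    and "\<exists>\<xi>>0. integrable M (\<lambda>x. exp (\<xi> * \<bar>\<omega> (\<lambda>_. 0) x\<bar>))"
    and "measure M {x \<in> space M. \<omega> (\<lambda>_. 0) x \<ge> 0} > 0"
    and "\<forall>i. u i \<ge> 0"
    and "\<forall>\<beta>>0. convergent (J_seq M \<omega> \<beta> u (\<beta> * r))"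
    and "\<forall>s. convergent (I_seq M \<omega> u s)"
    and "(I_rate M \<omega> u \<longlongrightarrow> I_rate M \<omega> u r) (at_left r)"
  shows "((\<lambda>\<beta>. J_rate M \<omega> \<beta> u (\<beta> * r)) \<longlongrightarrow> I_rate M \<omega> u r) at_top"
proof -
  interpret prob_space M by (rule assms(1))
  have measurable: "\<And>v. \<omega> v \<in> borel_measurable M"
    using assms(2) unfolding indep_vars_def2 by auto
  define c where "c = (\<Sum>i\<in>UNIV. u i) * ln (real CARD('d)) + 1"
  have "(\<Sum>i\<in>UNIV. u i) * ln (real CARD('d)) \<ge> 0"
    using assms(6) by (simp add: sum_nonneg)
  then have "c > 0" unfolding c_def by linarith
  have lower: "I_rate M \<omega> u (r - c / \<beta>) \<le> J_rate M \<omega> \<beta> u (\<beta> * r)" if "\<beta> > 0" for \<beta>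
    using that assms(6-8) measurable
    by (intro I_rate_shifted_le_J_rate) (auto simp: c_def finite_measure_axioms)
  have upper: "J_rate M \<omega> \<beta> u (\<beta> * r) \<le> I_rate M \<omega> u r" if "\<beta> > 0" for \<beta>
    using that assms(7,8) measurable
    by (intro J_rate_le_I_rate) (auto simp: finite_measure_axioms)
  show ?thesis
    using lower upper
    by (intro tendsto_sandwich[OF _ _ tendsto_left_shift_at_top[OF assms(9) \<open>c > 0\<close>] tendsto_const])
      (auto intro: eventually_mono[OF eventually_gt_at_top[of "0::real"]])
qed

end
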